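(* Let $\mathscr{A}\in\mathbb{R}^{n_1\times n_2\times n_3}$, $\mathscr{B}\in\mathbb{R}^{n_1\times s\times n_3}$, and suppose $k$ steps of the tensor tubal-global Golub–Kahan algorithm described in the context have been run (without breakdown). Then the tensors $\mathscr{V}_i$ and the tensors $\mathscr{U}_i$ produced are each T-orthonormal: $\langle\mathscr{V}_i,\mathscr{V}_j\rangle_T=\langle\mathscr{U}_i,\mathscr{U}_j\rangle_T=\mathbf{e}$ if $i=j$ and $=\mathbf{o}$ if $i\neq j$.
   Context: All tensors are real third-order arrays. $\widehat{\mathscr{A}}=\mathscr{A}\times_3F_{n_3}$ denotes the tensor obtained by applying the discrete Fourier transform ($F_{n_3}$ with entries $\omega^{(i-1)(j-1)}$, $\omega=e^{-2\pi\mathrm{i}/n_3}$) to each tube; its frontal slices $\hat A^{(k)}$ are the Fourier slices. T-product: $\mathscr{A}\star\mathscr{B}$ has Fourier slices $\hat A^{(k)}\hat B^{(k)}$. Transpose $\mathscr{A}^T$: transpose each frontal slice and reverse the order of frontal slices $2,\dots,n_3$. A tube is an element of $\mathbb{R}^{1\times1\times n_3}$; $\mathbf{e}$ has entries $(1,0,\dots,0)$, $\mathbf{o}$ is the zero tube. For a tube $\mathbf{a}$, $\mathbf{a}\divideontimes\mathscr{W}$ has $(i,j)$ tube $\mathbf{a}\star\mathscr{W}(i,j,:)$. T-trace: tube whose $k$-th Fourier slice is the trace of the $k$-th Fourier slice. Tubal inner product $\langle\mathscr{X},\mathscr{Y}\rangle_T=\text{T-trace}(\mathscr{X}^T\star\mathscr{Y})$.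 Normalization of $\mathscr{W}$: $\mathbf{a}$ is the tube with $k$-th Fourier coefficient $\|\hat W^{(k)}\|_F$ (breakdown if one is zero) and $\mathscr{Q}$ has Fourier slices $\hat W^{(k)}/\|\hat W^{(k)}\|_F$; output $[\mathscr{Q},\mathbf{a}]$. Tubal-global Golub–Kahan algorithm: $\mathscr{V}_0=0\in\mathbb{R}^{n_2\times s\times n_3}$, $[\mathscr{U}_1,\mathbf{a}_1]=\mathrm{Normalization}(\mathscr{B})$; for $j=1,\dots,k$: $\widetilde{\mathscr{V}}=\mathscr{A}^T\star\mathscr{U}_j-\mathbf{a}_j\divideontimes\mathscr{V}_{j-1}$, $[\mathscr{V}_j,\mathbf{b}_j]=\mathrm{Normalization}(\widetilde{\mathscr{V}})$, $\widetilde{\mathscr{U}}=\mathscr{A}\star\mathscr{V}_j-\mathbf{b}_j\divideontimes\mathscr{U}_j$, $[\mathscr{U}_{j+1},\mathbf{a}_{j+1}]=\mathrm{Normalization}(\widetilde{\mathscr{U}})$. *)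

theory Defs
  imports Complex_Main
begin

text \<open>Third-order real tensors are represented as functions of three 0-based indices
  (row i, column j, frontal slice l); dimensions are carried explicitly.
  A tube is a 1 x 1 x n3 tensor (only index 0 0 l is relevant).\<close>

type_synonym tens = "nat \<Rightarrow> nat \<Rightarrow> nat \<Rightarrow> real"

definition cdft :: "nat \<Rightarrow> (nat \<Rightarrow> complex) \<Rightarrow> nat \<Rightarrow> complex" where
  "cdft n x k = (\<Sum>l<n. x l * cis (- 2 * pi * real k * real l / real n))"

definition cidft :: "nat \<Rightarrow> (nat \<Rightarrow> complex) \<Rightarrow> nat \<Rightarrow> complex" where
  "cidft n y l = (\<Sum>k<n. y k * cis (2 * pi * real k * real l / real n)) / of_nat n"

definition hat :: "nat \<Rightarrow> tens \<Rightarrow> nat \<Rightarrow> nat \<Rightarrow> nat \<Rightarrow> complex" where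
  "hat n3 A i j k = cdft n3 (\<lambda>l. complex_of_real (A i j l)) k"

text \<open>Back-transform of a Fourier-domain tensor; for the conjugate-symmetric data
  arising here the result is real, so taking the real part loses nothing.\<close>
definition unhat :: "nat \<Rightarrow> (nat \<Rightarrow> nat \<Rightarrow> nat \<Rightarrow> complex) \<Rightarrow> tens" where
  "unhat n3 H i j l = Re (cidft n3 (H i j) l)"

definition tprod :: "nat \<Rightarrow> nat \<Rightarrow> tens \<Rightarrow> tens \<Rightarrow> tens" where
  "tprod m n3 A B = unhat n3 (\<lambda>i j k. \<Sum>p<m. hat n3 A i p k * hat n3 B p j k)"

definition ttransp :: "nat \<Rightarrow> tens \<Rightarrow> tens" where
  "ttransp n3 A i j l = A j i (if l = 0 then 0 else n3 - l)"

definition tube_e :: tens where "tube_e = (\<lambda>_ _ l. if l = 0 then 1 else 0)"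
definition tube_o :: tens where "tube_o = (\<lambda>_ _ _. 0)"

definition tube_smult :: "nat \<Rightarrow> tens \<Rightarrow> tens \<Rightarrow> tens" where
  "tube_smult n3 a W i j = tprod 1 n3 a (\<lambda>_ _. W i j) 0 0"

definition tsub :: "tens \<Rightarrow> tens \<Rightarrow> tens" where
  "tsub X Y i j l = X i j l - Y i j l"

definition ttrace :: "nat \<Rightarrow> nat \<Rightarrow> tens \<Rightarrow> tens" where
  "ttrace n n3 X = unhat n3 (\<lambda>_ _ k. \<Sum>i<n. hat n3 X i i k)"

definition tinner :: "nat \<Rightarrow> nat \<Rightarrow> nat \<Rightarrow> tens \<Rightarrow> tens \<Rightarrow> tens" where
  "tinner n1 n2 n3 X Y = ttrace n2 n3 (tprod n1 n3 (ttransp n3 X) Y)"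

definition slice_fnorm :: "nat \<Rightarrow> nat \<Rightarrow> nat \<Rightarrow> tens \<Rightarrow> nat \<Rightarrow> real" where
  "slice_fnorm n1 n2 n3 W k = sqrt (\<Sum>i<n1. \<Sum>j<n2. (cmod (hat n3 W i j k))\<^sup>2)"

definition breaks :: "nat \<Rightarrow> nat \<Rightarrow> nat \<Rightarrow> tens \<Rightarrow> bool" where
  "breaks n1 n2 n3 W \<longleftrightarrow> (\<exists>k<n3. slice_fnorm n1 n2 n3 W k = 0)"

definition normalization :: "nat \<Rightarrow> nat \<Rightarrow> nat \<Rightarrow> tens \<Rightarrow> tens \<times> tens" where
  "normalization n1 n2 n3 W =
     (unhat n3 (\<lambda>i j k. hat n3 W i j k / complex_of_real (slice_fnorm n1 n2 n3 W k)),
      unhat n3 (\<lambda>_ _ k. complex_of_real (slice_fnorm n1 n2 n3 W k)))"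

text \<open>Golub--Kahan. A state after j steps is (U_(j+1), a_(j+1), V_j, b_j).
  A in R^(n1 x n2 x n3), B in R^(n1 x s x n3).\<close>

definition gk_Vtil :: "tens \<Rightarrow> nat \<Rightarrow> nat \<Rightarrow> nat \<Rightarrow> tens \<times> tens \<times> tens \<times> tens \<Rightarrow> tens" where
  "gk_Vtil A n1 n2 n3 st = (case st of (U, a, V, b) \<Rightarrow>
      tsub (tprod n1 n3 (ttransp n3 A) U) (tube_smult n3 a V))"

definition gk_Util :: "tens \<Rightarrow> nat \<Rightarrow> nat \<Rightarrow> nat \<Rightarrow> nat \<Rightarrow> tens \<times> tens \<times> tens \<times> tens \<Rightarrow> tens" where
  "gk_Util A n1 n2 s n3 st = (case st of (U, a, V, b) \<Rightarrow>
      (case normalization n2 s n3 (gk_Vtil A n1 n2 n3 st) of (V', b') \<Rightarrow>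
         tsub (tprod n2 n3 A V') (tube_smult n3 b' U)))"

definition gk_step :: "tens \<Rightarrow> nat \<Rightarrow> nat \<Rightarrow> nat \<Rightarrow> nat \<Rightarrow> tens \<times> tens \<times> tens \<times> tens
    \<Rightarrow> tens \<times> tens \<times> tens \<times> tens" where
  "gk_step A n1 n2 s n3 st =
     (case normalization n2 s n3 (gk_Vtil A n1 n2 n3 st) of (V', b') \<Rightarrow>
      (case normalization n1 s n3 (gk_Util A n1 n2 s n3 st) of (U', a') \<Rightarrow>
        (U', a', V', b')))"

fun gk :: "tens \<Rightarrow> tens \<Rightarrow> nat \<Rightarrow> nat \<Rightarrow> nat \<Rightarrow> nat \<Rightarrow> nat \<Rightarrow> tens \<times> tens \<times> tens \<times> tens" where
  "gk A B n1 n2 s n3 0 =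
     (fst (normalization n1 s n3 B), snd (normalization n1 s n3 B), (\<lambda>_ _ _. 0), (\<lambda>_ _ _. 0))"
| "gk A B n1 n2 s n3 (Suc j) = gk_step A n1 n2 s n3 (gk A B n1 n2 s n3 j)"

definition gkU :: "tens \<Rightarrow> tens \<Rightarrow> nat \<Rightarrow> nat \<Rightarrow> nat \<Rightarrow> nat \<Rightarrow> nat \<Rightarrow> tens" where
  "gkU A B n1 n2 s n3 i = fst (gk A B n1 n2 s n3 (i - 1))"

definition gkV :: "tens \<Rightarrow> tens \<Rightarrow> nat \<Rightarrow> nat \<Rightarrow> nat \<Rightarrow> nat \<Rightarrow> nat \<Rightarrow> tens" where
  "gkV A B n1 n2 s n3 i = fst (snd (snd (gk A B n1 n2 s n3 i)))"

end

theory Submission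
  imports Defs
begin

text \<open>Every operation of the algorithm acts frequency by frequency after the DFT along the
  tubes: the k-th Fourier slice of a T-product is the product of the k-th slices, the transpose
  becomes the conjugate transpose, and the Fourier coefficients of the tubal inner product are
  the Frobenius inner products of the slices. Hence, for each frequency, the Fourier slices of
  the U_i and V_i are produced by the ordinary global Golub--Kahan recurrence for the complex
  matrix given by the slice of A, with Frobenius-norm normalization, and are orthonormal by the
  classical induction on the three-term recurrences. A tube all of whose Fourier coefficients
  are 1 (resp. 0) is e (resp. o).\<close>

section \<open>Roots of unity and the discrete Fourier transform\<close>

definition unit_root :: "nat \<Rightarrow> int \<Rightarrow> complex" where
  "unit_root n a = cis (2 * pi * of_int a / real n)"

lemma unit_root_add: "unit_root n (a + b) = unit_root n a * unit_root n b"
  by (simp add: unit_root_def cis_mult add_divide_distrib distrib_left)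

lemma unit_root_uminus: "unit_root n (- a) = cnj (unit_root n a)"
  by (simp add: unit_root_def cis_cnj)

lemma unit_root_mult_of_nat: "unit_root n (a * int l) = unit_root n a ^ l"
  by (simp add: unit_root_def DeMoivre algebra_simps)

lemma unit_root_multiple:
  assumes "n > 0" shows "unit_root n (int n * q) = 1"
proof -
  have "2 * pi * of_int (int n * q) / real n = 2 * pi * of_int q"
    using assms by simp
  then show ?thesis by (simp add: unit_root_def)
qed

lemma unit_root_eq_1_iff:
  assumes "n > 0" shows "unit_root n a = 1 \<longleftrightarrow> int n dvd a"
proof
  assume "unit_root n a = 1"
  then have "cos (2 * pi * of_int a / real n) = 1"
    unfolding unit_root_def by (metis cis.sel(1) one_complex.sel(1))
  then obtain q :: int where "2 * pi * of_int a / real n = of_int q * 2 * pi"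
    by (auto simp: cos_one_2pi_int)
  then have "of_int a = (of_int (int n * q) :: real)"
    using assms by (simp add: field_simps)
  then show "int n dvd a" by (metis of_int_eq_iff dvd_triv_left)
qed (auto simp: unit_root_multiple[OF assms])

lemma sum_unit_root:
  assumes "n > 0"
  shows "(\<Sum>l<n. unit_root n (a * int l)) = (if int n dvd a then of_nat n else 0)"
proof (cases "int n dvd a")
  case True
  then have "unit_root n a = 1" by (simp add: unit_root_eq_1_iff[OF assms])
  with True show ?thesis by (simp add: unit_root_mult_of_nat)
next
  case False
  then have "unit_root n a \<noteq> 1" by (simp add: unit_root_eq_1_iff[OF assms])
  moreover have "unit_root n a ^ n = 1"
    by (metis mult.commute unit_root_mult_of_nat unit_root_multiple[OF assms])
  ultimately show ?thesis
    using False by (simp add: unit_root_mult_of_nat geometric_sum)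
qed

text \<open>\<open>(n - k) mod n\<close> is the index of the frequency \<open>-k\<close>.\<close>

lemma reflect_index_eq: "(k::nat) < n \<Longrightarrow> (n - k) mod n = (if k = 0 then 0 else n - k)"
  by (cases "k = 0") auto

lemma reflect_index_involution: "(k::nat) < n \<Longrightarrow> (n - (n - k) mod n) mod n = k"
  by (cases "k = 0") auto

lemma unit_root_reflect:
  assumes "k < n"
  shows "unit_root n (int ((n - k) mod n) * b) = unit_root n (- (int k * b))"
proof (cases "k = 0")
  case False
  with assms have "int ((n - k) mod n) * b = - (int k * b) + int n * b"
    by (simp add: reflect_index_eq of_nat_diff algebra_simps)
  then show ?thesis
    using assms by (simp only: unit_root_add unit_root_multiple) simp
qed simp

lemma sum_reflect: "(\<Sum>k<n. f ((n - k) mod n)) = (\<Sum>k<(n::nat). f k)"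
  by (rule sum.reindex_bij_witness[of _ "\<lambda>k. (n - k) mod n" "\<lambda>k. (n - k) mod n"])
    (auto simp: reflect_index_involution intro: mod_less_divisor)

lemma cdft_unit_root: "cdft n x k = (\<Sum>l<n. x l * unit_root n (- (int k * int l)))"
  by (simp add: cdft_def unit_root_def mult.assoc)

lemma cidft_unit_root: "cidft n y l = (\<Sum>k<n. y k * unit_root n (int k * int l)) / of_nat n"
  by (simp add: cidft_def unit_root_def mult.assoc)

lemma int_dvd_diff_iff_eq:
  assumes "k < n" "k' < n"
  shows "int n dvd int k' - int k \<longleftrightarrow> k' = k"
proof
  assume "int n dvd int k' - int k"
  then show "k' = k"
    using assms dvd_imp_le_int[of "int k' - int k" "int n"] by (cases "k' = k") auto
qed simp

lemma cdft_cidft: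
  assumes "k < n"
  shows "cdft n (cidft n h) k = h k"
proof -
  have n: "n > 0" using assms by simp
  have "cdft n (cidft n h) k
      = (\<Sum>l<n. \<Sum>k'<n. h k' * unit_root n ((int k' - int k) * int l) / of_nat n)"
    unfolding cdft_unit_root cidft_unit_root sum_divide_distrib sum_distrib_right
    by (intro sum.cong refl) (simp add: algebra_simps flip: unit_root_add)
  also have "\<dots> = (\<Sum>k'<n. h k' * (\<Sum>l<n. unit_root n ((int k' - int k) * int l)) / of_nat n)"
    by (subst sum.swap) (simp add: sum_distrib_left sum_divide_distrib)
  also have "\<dots> = (\<Sum>k'<n. if k' = k then h k else 0)"
    using n assms by (intro sum.cong refl) (simp add: sum_unit_root int_dvd_diff_iff_eq)
  also have "\<dots> = h k" using assms by simp
  finally show ?thesis .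
qed

lemma cidft_conj_symmetric:
  assumes "\<And>k. k < n \<Longrightarrow> h ((n - k) mod n) = cnj (h k)"
  shows "cnj (cidft n h l) = cidft n h l"
proof -
  have "cnj (cidft n h l)
      = (\<Sum>k<n. h ((n - k) mod n) * unit_root n (int ((n - k) mod n) * int l)) / of_nat n"
    unfolding cidft_unit_root
    by (simp add: cnj_sum assms unit_root_reflect flip: unit_root_uminus)
  also have "\<dots> = cidft n h l"
    unfolding sum_reflect[of "\<lambda>k. h k * unit_root n (int k * int l)"] cidft_unit_root ..
  finally show ?thesis .
qed

section \<open>Fourier slices of tensor operations\<close>

abbreviation fourier_slice :: "nat \<Rightarrow> tens \<Rightarrow> nat \<Rightarrow> nat \<Rightarrow> nat \<Rightarrow> complex" where
  "fourier_slice n X k \<equiv> \<lambda>p q. hat n X p q k"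

text \<open>The real part taken by \<open>unhat\<close> loses nothing: conjugate-symmetric data have a real
  inverse DFT.\<close>

lemma hat_unhat:
  assumes "k < n" and "\<And>i j k. k < n \<Longrightarrow> H i j ((n - k) mod n) = cnj (H i j k)"
  shows "hat n (unhat n H) i j k = H i j k"
proof -
  have "complex_of_real (Re (cidft n (H i j) l)) = cidft n (H i j) l" for l
    using cidft_conj_symmetric[of n "H i j" l] assms(2) by (simp add: complex_eq_iff)
  then show ?thesis
    using cdft_cidft[OF assms(1)] by (simp add: hat_def unhat_def)
qed

lemma hat_reflect:
  assumes "k < n"
  shows "hat n X i j ((n - k) mod n) = cnj (hat n X i j k)"
proof -
  have "unit_root n (- (int ((n - k) mod n) * int l)) = unit_root n (int k * int l)" for l
    using unit_root_reflect[OF assms, of "- int l"] by simp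
  then show ?thesis
    by (simp add: hat_def cdft_unit_root cnj_sum flip: unit_root_uminus)
qed

lemma hat_tprod:
  assumes "k < n"
  shows "hat n (tprod m n A B) i j k = (\<Sum>p<m. hat n A i p k * hat n B p j k)"
  unfolding tprod_def using assms by (intro hat_unhat) (simp_all add: hat_reflect cnj_sum)

lemma hat_tsub: "hat n (tsub X Y) i j k = hat n X i j k - hat n Y i j k"
  by (simp add: hat_def cdft_def tsub_def sum_subtractf[symmetric] algebra_simps)

lemma hat_ttransp:
  assumes "k < n"
  shows "hat n (ttransp n X) i j k = cnj (hat n X j i k)"
proof -
  define f where "f l = complex_of_real (X j i l) * unit_root n (int k * int l)" for l
  have "hat n (ttransp n X) i j k = (\<Sum>l<n. f ((n - l) mod n))"
    unfolding hat_def cdft_unit_root ttransp_def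
  proof (intro sum.cong refl)
    fix l assume "l \<in> {..<n}"
    then have "l < n" by simp
    then show "complex_of_real (X j i (if l = 0 then 0 else n - l))
        * unit_root n (- (int k * int l)) = f ((n - l) mod n)"
      using unit_root_reflect[of l n "int k"] by (simp add: f_def reflect_index_eq mult.commute)
  qed
  also have "\<dots> = (\<Sum>l<n. f l)"
    by (rule sum_reflect)
  also have "\<dots> = cnj (hat n X j i k)"
    unfolding f_def by (simp add: hat_def cdft_unit_root cnj_sum flip: unit_root_uminus)
  finally show ?thesis .
qed

lemma hat_tube_smult:
  assumes "k < n"
  shows "hat n (tube_smult n a V) i j k = hat n a 0 0 k * hat n V i j k"
proof -
  have "hat n (tube_smult n a V) i j k = hat n (tprod 1 n a (\<lambda>_ _. V i j)) 0 0 k"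
    by (simp add: hat_def tube_smult_def)
  also have "\<dots> = hat n a 0 0 k * hat n V i j k"
    using assms by (simp add: hat_tprod) (simp add: hat_def)
  finally show ?thesis .
qed

lemma slice_fnorm_reflect:
  "k < n \<Longrightarrow> slice_fnorm n1 n2 n W ((n - k) mod n) = slice_fnorm n1 n2 n W k"
  by (simp add: slice_fnorm_def hat_reflect)

lemma hat_normalization:
  assumes "k < n"
  shows "hat n (fst (normalization n1 n2 n W)) i j k
         = hat n W i j k / of_real (slice_fnorm n1 n2 n W k)"
    and "hat n (snd (normalization n1 n2 n W)) i j k = of_real (slice_fnorm n1 n2 n W k)"
  unfolding normalization_def fst_conv snd_conv using assms
  by (intro hat_unhat; simp add: hat_reflect slice_fnorm_reflect)+

lemma hat_normalization_scaled:
  assumes "k < n" and "slice_fnorm m s n W k \<noteq> 0"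
  shows "of_real (slice_fnorm m s n W k) * hat n (fst (normalization m s n W)) p q k
       = hat n W p q k"
  using assms by (simp add: hat_normalization)

section \<open>The Frobenius inner product of complex matrices\<close>

type_synonym cmat = "nat \<Rightarrow> nat \<Rightarrow> complex"

definition frob_inner :: "nat \<Rightarrow> nat \<Rightarrow> cmat \<Rightarrow> cmat \<Rightarrow> complex" where
  "frob_inner m s X Y = (\<Sum>q<s. \<Sum>p<m. cnj (X p q) * Y p q)"

definition mmult :: "nat \<Rightarrow> cmat \<Rightarrow> cmat \<Rightarrow> cmat" where
  "mmult n M Y p q = (\<Sum>r<n. M p r * Y r q)"

definition adj_mmult :: "nat \<Rightarrow> cmat \<Rightarrow> cmat \<Rightarrow> cmat" where
  "adj_mmult m M X p q = (\<Sum>r<m. cnj (M r p) * X r q)"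

lemma frob_inner_commute: "frob_inner m s Y X = cnj (frob_inner m s X Y)"
  by (simp add: frob_inner_def cnj_sum mult.commute)

lemma frob_inner_adj_mmult: "frob_inner n s Y (adj_mmult m M X) = frob_inner m s (mmult n M Y) X"
proof -
  have "frob_inner n s Y (adj_mmult m M X) = (\<Sum>q<s. \<Sum>p<n. \<Sum>r<m. cnj (Y p q) * cnj (M r p) * X r q)"
    by (simp add: frob_inner_def adj_mmult_def sum_distrib_left mult.assoc)
  also have "\<dots> = (\<Sum>q<s. \<Sum>r<m. \<Sum>p<n. cnj (Y p q) * cnj (M r p) * X r q)"
    by (rule sum.cong[OF refl]) (rule sum.swap)
  also have "\<dots> = frob_inner m s (mmult n M Y) X"
    by (simp add: frob_inner_def mmult_def cnj_sum sum_distrib_left mult_ac)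
  finally show ?thesis .
qed

lemma frob_inner_mmult: "frob_inner m s X (mmult n M Y) = frob_inner n s (adj_mmult m M X) Y"
  by (metis frob_inner_adj_mmult frob_inner_commute)

lemma frob_inner_right_combination:
  assumes "\<And>p q. p < m \<Longrightarrow> q < s \<Longrightarrow> c * Y p q = Z p q - d * W p q"
  shows "c * frob_inner m s X Y = frob_inner m s X Z - d * frob_inner m s X W"
proof -
  have "c * frob_inner m s X Y = (\<Sum>q<s. \<Sum>p<m. cnj (X p q) * (c * Y p q))"
    by (simp add: frob_inner_def sum_distrib_left algebra_simps)
  also have "\<dots> = (\<Sum>q<s. \<Sum>p<m. cnj (X p q) * Z p q - d * (cnj (X p q) * W p q))"
  proof (intro sum.cong refl)
    fix q p assume "q \<in> {..<s}" "p \<in> {..<m}"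
    then have "Z p q = c * Y p q + d * W p q"
      using assms by (simp add: algebra_simps)
    then show "cnj (X p q) * (c * Y p q) = cnj (X p q) * Z p q - d * (cnj (X p q) * W p q)"
      by (simp add: algebra_simps)
  qed
  also have "\<dots> = frob_inner m s X Z - d * frob_inner m s X W"
    by (simp add: frob_inner_def sum_subtractf sum_distrib_left)
  finally show ?thesis .
qed

lemma frob_inner_left_combination:
  assumes "\<And>p q. p < m \<Longrightarrow> q < s \<Longrightarrow> Y p q = of_real c * Z p q + of_real d * W p q"
  shows "frob_inner m s Y X = of_real c * frob_inner m s Z X + of_real d * frob_inner m s W X"
proof -
  have "frob_inner m s Y X
      = (\<Sum>q<s. \<Sum>p<m. of_real c * (cnj (Z p q) * X p q) + of_real d * (cnj (W p q) * X p q))"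
    unfolding frob_inner_def using assms by (intro sum.cong refl) (simp add: algebra_simps)
  then show ?thesis
    by (simp add: frob_inner_def sum.distrib sum_distrib_left)
qed

lemma frob_inner_fourier_slice_self:
  "frob_inner m s (fourier_slice n W k) (fourier_slice n W k) = of_real ((slice_fnorm m s n W k)\<^sup>2)"
proof -
  have "cnj z * z = of_real ((cmod z)\<^sup>2)" for z
    using complex_norm_square[of z] by (simp add: mult.commute)
  then show ?thesis
    by (simp add: frob_inner_def slice_fnorm_def sum_nonneg sum.swap[of _ "{..<s}"])
qed

lemma frob_inner_normalization:
  assumes "k < n" and "slice_fnorm m s n W k \<noteq> 0"
  shows "frob_inner m s (fourier_slice n (fst (normalization m s n W)) k)
                        (fourier_slice n (fst (normalization m s n W)) k) = 1"
proof -
  have "frob_inner m s (fourier_slice n (fst (normalization m s n W)) k)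
                       (fourier_slice n (fst (normalization m s n W)) k)
      = frob_inner m s (fourier_slice n W k) (fourier_slice n W k)
        / of_real ((slice_fnorm m s n W k)\<^sup>2)"
    using assms(1)
    by (simp add: hat_normalization frob_inner_def sum_divide_distrib power2_eq_square)
  then show ?thesis
    using assms(2) by (simp add: frob_inner_fourier_slice_self)
qed

lemma tinner_eq_cidft:
  assumes "l < n"
  shows "tinner m s n X Y 0 0 l
       = Re (cidft n (\<lambda>k. frob_inner m s (fourier_slice n X k) (fourier_slice n Y k)) l)"
  unfolding tinner_def ttrace_def unhat_def cidft_def
  by (intro arg_cong[where f = Re] arg_cong2[where f = "(/)"] sum.cong refl)
    (simp add: hat_tprod hat_ttransp frob_inner_def)

lemma cidft_const:
  assumes "l < n"
  shows "cidft n (\<lambda>_. c) l = (if l = 0 then c else 0)"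
proof -
  have "cidft n (\<lambda>_. c) l = c * (\<Sum>k<n. unit_root n (int l * int k)) / of_nat n"
    by (simp add: cidft_unit_root sum_distrib_left mult.commute)
  also have "\<dots> = (if l = 0 then c else 0)"
    using assms by (auto simp: sum_unit_root dest: dvd_imp_le)
  finally show ?thesis .
qed

lemma tinner_eq_delta:
  assumes "l < n"
    and "\<And>k. k < n \<Longrightarrow>
           frob_inner m s (fourier_slice n X k) (fourier_slice n Y k) = (if P then 1 else 0)"
  shows "tinner m s n X Y 0 0 l = (if P then tube_e else tube_o) 0 0 l"
proof -
  have "tinner m s n X Y 0 0 l = Re (cidft n (\<lambda>_. if P then 1 else 0) l)"
    unfolding tinner_eq_cidft[OF assms(1)] cidft_def using assms(2) by simp
  then show ?thesis
    using assms(1) by (simp add: cidft_const tube_e_def tube_o_def)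
qed

section \<open>Orthonormality of the global Golub--Kahan vectors\<close>

definition orthonormal_upto :: "('a \<Rightarrow> 'a \<Rightarrow> complex) \<Rightarrow> (nat \<Rightarrow> 'a) \<Rightarrow> nat \<Rightarrow> bool" where
  "orthonormal_upto ip x n \<longleftrightarrow>
     (\<forall>a\<in>{1..n}. \<forall>b\<in>{1..n}. ip (x a) (x b) = (if a = b then 1 else 0))"

lemma orthonormal_upto_Suc:
  assumes "orthonormal_upto ip x n"
    and "ip (x (Suc n)) (x (Suc n)) = 1"
    and "\<And>i. 1 \<le> i \<Longrightarrow> i \<le> n \<Longrightarrow> ip (x i) (x (Suc n)) = 0"
    and "\<And>y z. ip z y = cnj (ip y z)"
  shows "orthonormal_upto ip x (Suc n)"
  unfolding orthonormal_upto_def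
proof (intro ballI)
  fix a b assume a: "a \<in> {1..Suc n}" and b: "b \<in> {1..Suc n}"
  consider "a \<le> n" "b \<le> n" | "a = Suc n" "b \<le> n" | "a \<le> n" "b = Suc n" | "a = Suc n" "b = Suc n"
    using a b by fastforce
  then show "ip (x a) (x b) = (if a = b then 1 else 0)"
  proof cases
    case 1
    then show ?thesis using assms(1) a b by (simp add: orthonormal_upto_def)
  next
    case 2
    then show ?thesis using assms(3)[of b] assms(4)[of "x b" "x (Suc n)"] b by simp
  next
    case 3
    then show ?thesis using assms(3)[of a] a by simp
  qed (simp add: assms(2))
qed

text \<open>The scalars \<open>\<alpha>\<close> and \<open>\<beta>\<close> are real (they are Frobenius norms in the
  algorithm), which is what lets them pass through the conjugate-linear argument of the inner
  product.\<close>

locale global_golub_kahan =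
  fixes n1 n2 s :: nat and M :: cmat and u v :: "nat \<Rightarrow> cmat" and \<alpha> \<beta> :: "nat \<Rightarrow> real"
    and K :: nat
  assumes v_0: "v 0 p q = 0"
    and u_unit: "1 \<le> j \<Longrightarrow> j \<le> Suc K \<Longrightarrow> frob_inner n1 s (u j) (u j) = 1"
    and v_unit: "1 \<le> j \<Longrightarrow> j \<le> K \<Longrightarrow> frob_inner n2 s (v j) (v j) = 1"
    and \<alpha>_nonzero: "1 \<le> j \<Longrightarrow> j \<le> K \<Longrightarrow> \<alpha> (Suc j) \<noteq> 0"
    and \<beta>_nonzero: "1 \<le> j \<Longrightarrow> j \<le> K \<Longrightarrow> \<beta> j \<noteq> 0"
    and v_recurrence: "1 \<le> j \<Longrightarrow> j \<le> K \<Longrightarrow> p < n2 \<Longrightarrow> q < s \<Longrightarrow>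
          \<beta> j * v j p q = adj_mmult n1 M (u j) p q - \<alpha> j * v (j - 1) p q"
    and u_recurrence: "1 \<le> j \<Longrightarrow> j \<le> K \<Longrightarrow> p < n1 \<Longrightarrow> q < s \<Longrightarrow>
          \<alpha> (Suc j) * u (Suc j) p q = mmult n2 M (v j) p q - \<beta> j * u j p q"
begin

abbreviation inner_u :: "cmat \<Rightarrow> cmat \<Rightarrow> complex" where "inner_u \<equiv> frob_inner n1 s"
abbreviation inner_v :: "cmat \<Rightarrow> cmat \<Rightarrow> complex" where "inner_v \<equiv> frob_inner n2 s"

lemma v_orthogonal_new:
  assumes "Suc j \<le> K" and u_on: "orthonormal_upto inner_u u (Suc j)"
    and v_on: "orthonormal_upto inner_v v j" and "1 \<le> i" "i \<le> j"
  shows "inner_v (v i) (v (Suc j)) = 0"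
proof -
  have M_v: "mmult n2 M (v i) p q = \<alpha> (Suc i) * u (Suc i) p q + \<beta> i * u i p q"
    if "p < n1" "q < s" for p q
    using u_recurrence[of i p q] that assms by (simp add: algebra_simps)
  have "\<beta> (Suc j) * inner_v (v i) (v (Suc j))
      = inner_v (v i) (adj_mmult n1 M (u (Suc j))) - \<alpha> (Suc j) * inner_v (v i) (v j)"
    using assms by (intro frob_inner_right_combination) (simp add: v_recurrence)
  also have "inner_v (v i) (adj_mmult n1 M (u (Suc j))) = inner_u (mmult n2 M (v i)) (u (Suc j))"
    by (rule frob_inner_adj_mmult)
  also have "\<dots> = \<alpha> (Suc i) * inner_u (u (Suc i)) (u (Suc j)) + \<beta> i * inner_u (u i) (u (Suc j))"
    by (intro frob_inner_left_combination M_v)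
  also have "inner_u (u (Suc i)) (u (Suc j)) = (if i = j then 1 else 0)"
    using u_on assms by (simp add: orthonormal_upto_def)
  also have "inner_u (u i) (u (Suc j)) = 0"
    using u_on assms by (simp add: orthonormal_upto_def)
  also have "inner_v (v i) (v j) = (if i = j then 1 else 0)"
    using v_on assms by (simp add: orthonormal_upto_def)
  finally have "\<beta> (Suc j) * inner_v (v i) (v (Suc j)) = 0"
    by simp
  then show ?thesis
    using \<beta>_nonzero[of "Suc j"] assms by simp
qed

lemma u_orthogonal_new:
  assumes "1 \<le> j" "j \<le> K" and u_on: "orthonormal_upto inner_u u j"
    and v_on: "orthonormal_upto inner_v v j" and "1 \<le> i" "i \<le> j"
  shows "inner_u (u i) (u (Suc j)) = 0"
proof -
  have M_u: "adj_mmult n1 M (u i) p q = \<beta> i * v i p q + \<alpha> i * v (i - 1) p q"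
    if "p < n2" "q < s" for p q
    using v_recurrence[of i p q] that assms by (simp add: algebra_simps)
  have "\<alpha> (Suc j) * inner_u (u i) (u (Suc j))
      = inner_u (u i) (mmult n2 M (v j)) - \<beta> j * inner_u (u i) (u j)"
    using assms by (intro frob_inner_right_combination) (simp add: u_recurrence)
  also have "inner_u (u i) (mmult n2 M (v j)) = inner_v (adj_mmult n1 M (u i)) (v j)"
    by (rule frob_inner_mmult)
  also have "\<dots> = \<beta> i * inner_v (v i) (v j) + \<alpha> i * inner_v (v (i - 1)) (v j)"
    by (intro frob_inner_left_combination M_u)
  also have "inner_v (v i) (v j) = (if i = j then 1 else 0)"
    using v_on assms by (simp add: orthonormal_upto_def)
  also have "inner_v (v (i - 1)) (v j) = 0"
  proof (cases "i = 1")
    case True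
    then show ?thesis by (simp add: frob_inner_def v_0)
  next
    case False
    then have "i - 1 \<in> {1..j}" "j \<in> {1..j}" "i - 1 \<noteq> j"
      using assms by auto
    then show ?thesis using v_on by (simp add: orthonormal_upto_def)
  qed
  also have "inner_u (u i) (u j) = (if i = j then 1 else 0)"
    using u_on assms by (simp add: orthonormal_upto_def)
  finally have "\<alpha> (Suc j) * inner_u (u i) (u (Suc j)) = 0"
    by simp
  then show ?thesis
    using \<alpha>_nonzero[of j] assms by simp
qed

lemma orthonormal: "orthonormal_upto inner_v v K \<and> orthonormal_upto inner_u u (Suc K)"
proof -
  have "orthonormal_upto inner_v v j \<and> orthonormal_upto inner_u u (Suc j)" if "j \<le> K" for j
    using that
  proof (induction j)
    case 0
    then show ?case by (simp add: orthonormal_upto_def u_unit)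
  next
    case (Suc j)
    then have v_on: "orthonormal_upto inner_v v j" and u_on: "orthonormal_upto inner_u u (Suc j)"
      by auto
    have v_on': "orthonormal_upto inner_v v (Suc j)"
    proof (rule orthonormal_upto_Suc[OF v_on])
      show "inner_v (v (Suc j)) (v (Suc j)) = 1"
        using Suc.prems by (simp add: v_unit)
      show "inner_v (v i) (v (Suc j)) = 0" if "1 \<le> i" "i \<le> j" for i
        using v_orthogonal_new[OF Suc.prems u_on v_on that] .
    qed (rule frob_inner_commute)
    have "orthonormal_upto inner_u u (Suc (Suc j))"
    proof (rule orthonormal_upto_Suc[OF u_on])
      show "inner_u (u (Suc (Suc j))) (u (Suc (Suc j))) = 1"
        using Suc.prems by (simp add: u_unit)
      show "inner_u (u i) (u (Suc (Suc j))) = 0" if "1 \<le> i" "i \<le> Suc j" for i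
        using u_orthogonal_new[OF _ Suc.prems u_on v_on' that] by simp
    qed (rule frob_inner_commute)
    with v_on' show ?case ..
  qed
  then show ?thesis by simp
qed

end

section \<open>The tubal-global Golub--Kahan algorithm in the Fourier domain\<close>

lemma gk_Suc_components:
  "gk A B n1 n2 s n3 (Suc j) =
    (fst (normalization n1 s n3 (gk_Util A n1 n2 s n3 (gk A B n1 n2 s n3 j))),
     snd (normalization n1 s n3 (gk_Util A n1 n2 s n3 (gk A B n1 n2 s n3 j))),
     fst (normalization n2 s n3 (gk_Vtil A n1 n2 n3 (gk A B n1 n2 s n3 j))),
     snd (normalization n2 s n3 (gk_Vtil A n1 n2 n3 (gk A B n1 n2 s n3 j))))"
  by (simp add: gk_step_def split: prod.split)

lemma hat_gk_Vtil:
  assumes "k < n3"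
  shows "hat n3 (gk_Vtil A n1 n2 n3 st) p q k
       = adj_mmult n1 (fourier_slice n3 A k) (fourier_slice n3 (fst st) k) p q
         - hat n3 (fst (snd st)) 0 0 k * hat n3 (fst (snd (snd st))) p q k"
  using assms by (cases st)
    (simp add: gk_Vtil_def hat_tsub hat_tprod hat_ttransp hat_tube_smult adj_mmult_def)

lemma hat_gk_Util:
  assumes "k < n3"
  shows "hat n3 (gk_Util A n1 n2 s n3 st) p q k
       = mmult n2 (fourier_slice n3 A k)
           (fourier_slice n3 (fst (normalization n2 s n3 (gk_Vtil A n1 n2 n3 st))) k) p q
         - hat n3 (snd (normalization n2 s n3 (gk_Vtil A n1 n2 n3 st))) 0 0 k
           * hat n3 (fst st) p q k"
  unfolding gk_Util_def case_prod_beta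
  using assms by (simp add: hat_tsub hat_tprod hat_tube_smult mmult_def)

definition gk_unnormalized_U :: "tens \<Rightarrow> tens \<Rightarrow> nat \<Rightarrow> nat \<Rightarrow> nat \<Rightarrow> nat \<Rightarrow> nat \<Rightarrow> tens" where
  "gk_unnormalized_U A B n1 n2 s n3 j =
     (case j of 0 \<Rightarrow> B | Suc i \<Rightarrow> gk_Util A n1 n2 s n3 (gk A B n1 n2 s n3 i))"

lemma gk_U_a_normalization:
  "fst (gk A B n1 n2 s n3 j) = fst (normalization n1 s n3 (gk_unnormalized_U A B n1 n2 s n3 j))"
  "fst (snd (gk A B n1 n2 s n3 j))
     = snd (normalization n1 s n3 (gk_unnormalized_U A B n1 n2 s n3 j))"
  by (cases j; simp only: gk_unnormalized_U_def gk_Suc_components gk.simps(1) nat.case prod.sel)+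

lemma gkU_Suc: "gkU A B n1 n2 s n3 (Suc j) = fst (gk A B n1 n2 s n3 j)"
  by (simp add: gkU_def)

lemma gkV_Suc:
  "gkV A B n1 n2 s n3 (Suc j)
     = fst (normalization n2 s n3 (gk_Vtil A n1 n2 n3 (gk A B n1 n2 s n3 j)))"
  by (simp only: gkV_def gk_Suc_components prod.sel)

lemma hat_gkV_recurrence:
  assumes "k < n3" and "slice_fnorm n2 s n3 (gk_Vtil A n1 n2 n3 (gk A B n1 n2 s n3 j)) k \<noteq> 0"
  shows "of_real (slice_fnorm n2 s n3 (gk_Vtil A n1 n2 n3 (gk A B n1 n2 s n3 j)) k)
           * hat n3 (gkV A B n1 n2 s n3 (Suc j)) p q k
       = adj_mmult n1 (fourier_slice n3 A k) (fourier_slice n3 (gkU A B n1 n2 s n3 (Suc j)) k) p q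
         - of_real (slice_fnorm n1 s n3 (gk_unnormalized_U A B n1 n2 s n3 j) k)
           * hat n3 (gkV A B n1 n2 s n3 j) p q k"
  using assms
  by (simp add: gkV_Suc hat_normalization_scaled hat_gk_Vtil gkU_Suc gk_U_a_normalization
      hat_normalization) (simp add: gkV_def)

lemma hat_gkU_recurrence:
  assumes "k < n3" and "slice_fnorm n1 s n3 (gk_unnormalized_U A B n1 n2 s n3 (Suc j)) k \<noteq> 0"
  shows "of_real (slice_fnorm n1 s n3 (gk_unnormalized_U A B n1 n2 s n3 (Suc j)) k)
           * hat n3 (gkU A B n1 n2 s n3 (Suc (Suc j))) p q k
       = mmult n2 (fourier_slice n3 A k) (fourier_slice n3 (gkV A B n1 n2 s n3 (Suc j)) k) p q
         - of_real (slice_fnorm n2 s n3 (gk_Vtil A n1 n2 n3 (gk A B n1 n2 s n3 j)) k)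
           * hat n3 (gkU A B n1 n2 s n3 (Suc j)) p q k"
proof -
  have "of_real (slice_fnorm n1 s n3 (gk_unnormalized_U A B n1 n2 s n3 (Suc j)) k)
          * hat n3 (gkU A B n1 n2 s n3 (Suc (Suc j))) p q k
      = hat n3 (gk_unnormalized_U A B n1 n2 s n3 (Suc j)) p q k"
    unfolding gkU_Suc gk_U_a_normalization using assms by (rule hat_normalization_scaled)
  then show ?thesis
    unfolding gk_unnormalized_U_def nat.case hat_gk_Util[OF assms(1)] gkV_Suc gkU_Suc
      hat_normalization(2)[OF assms(1)] .
qed

text \<open>For every frequency k0 the Fourier slices run the global Golub--Kahan recurrence; the
  scalars \<open>\<alpha> i\<close>, \<open>\<beta> i\<close> are the k0-th Fourier coefficients of the tubes a_i, b_i.\<close>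

lemma gk_fourier_slices_global_golub_kahan:
  assumes k0: "k0 < n3"
    and B: "\<not> breaks n1 s n3 B"
    and steps: "\<forall>j<k. \<not> breaks n2 s n3 (gk_Vtil A n1 n2 n3 (gk A B n1 n2 s n3 j))
              \<and> \<not> breaks n1 s n3 (gk_Util A n1 n2 s n3 (gk A B n1 n2 s n3 j))"
  shows "global_golub_kahan n1 n2 s (fourier_slice n3 A k0)
           (\<lambda>i. fourier_slice n3 (gkU A B n1 n2 s n3 i) k0)
           (\<lambda>i. fourier_slice n3 (gkV A B n1 n2 s n3 i) k0)
           (\<lambda>i. slice_fnorm n1 s n3 (gk_unnormalized_U A B n1 n2 s n3 (i - 1)) k0)
           (\<lambda>i. slice_fnorm n2 s n3 (gk_Vtil A n1 n2 n3 (gk A B n1 n2 s n3 (i - 1))) k0) k"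
proof
  let ?u = "\<lambda>i. fourier_slice n3 (gkU A B n1 n2 s n3 i) k0"
  let ?v = "\<lambda>i. fourier_slice n3 (gkV A B n1 n2 s n3 i) k0"
  let ?\<alpha> = "\<lambda>i. slice_fnorm n1 s n3 (gk_unnormalized_U A B n1 n2 s n3 (i - 1)) k0"
  let ?\<beta> = "\<lambda>i. slice_fnorm n2 s n3 (gk_Vtil A n1 n2 n3 (gk A B n1 n2 s n3 (i - 1))) k0"
  have U_nonzero: "slice_fnorm n1 s n3 (gk_unnormalized_U A B n1 n2 s n3 j) k0 \<noteq> 0" if "j \<le> k" for j
    using B steps that k0 by (cases j) (auto simp: gk_unnormalized_U_def breaks_def)
  have V_nonzero: "slice_fnorm n2 s n3 (gk_Vtil A n1 n2 n3 (gk A B n1 n2 s n3 j)) k0 \<noteq> 0"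
    if "j < k" for j
    using steps that k0 by (auto simp: breaks_def)
  show "?v 0 p q = 0" for p q
    by (simp add: gkV_def hat_def cdft_def)
  fix j p q
  show "frob_inner n1 s (?u j) (?u j) = 1" if "1 \<le> j" "j \<le> Suc k"
    using that k0 U_nonzero[of "j - 1"]
    by (cases j) (simp_all add: gkU_Suc gk_U_a_normalization frob_inner_normalization)
  show "frob_inner n2 s (?v j) (?v j) = 1" if "1 \<le> j" "j \<le> k"
    using that k0 V_nonzero[of "j - 1"]
    by (cases j) (simp_all add: gkV_Suc frob_inner_normalization)
  show "?\<alpha> (Suc j) \<noteq> 0" if "j \<le> k"
    using that U_nonzero by simp
  show "?\<beta> j \<noteq> 0" if "1 \<le> j" "j \<le> k"
    using that V_nonzero by simp
  show "?\<beta> j * ?v j p q = adj_mmult n1 (fourier_slice n3 A k0) (?u j) p q - ?\<alpha> j * ?v (j - 1) p q"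
    if j: "1 \<le> j" "j \<le> k"
  proof -
    obtain i where "j = Suc i" "i < k" using j by (cases j) auto
    then show ?thesis using hat_gkV_recurrence[OF k0 V_nonzero] by simp
  qed
  show "?\<alpha> (Suc j) * ?u (Suc j) p q = mmult n2 (fourier_slice n3 A k0) (?v j) p q - ?\<beta> j * ?u j p q"
    if j: "1 \<le> j" "j \<le> k"
  proof -
    obtain i where "j = Suc i" "Suc i \<le> k" using j by (cases j) auto
    then show ?thesis using hat_gkU_recurrence[OF k0 U_nonzero] by simp
  qed
qed

theorem proposition12:
  fixes A B :: tens and n1 n2 n3 s k :: nat
  assumes "\<not> breaks n1 s n3 B"
    and "\<forall>j<k. \<not> breaks n2 s n3 (gk_Vtil A n1 n2 n3 (gk A B n1 n2 s n3 j))
              \<and> \<not> breaks n1 s n3 (gk_Util A n1 n2 s n3 (gk A B n1 n2 s n3 j))"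
  shows "(\<forall>i\<in>{1..k}. \<forall>j\<in>{1..k}. \<forall>l<n3.
           tinner n2 s n3 (gkV A B n1 n2 s n3 i) (gkV A B n1 n2 s n3 j) 0 0 l
             = (if i = j then tube_e else tube_o) 0 0 l)
       \<and> (\<forall>i\<in>{1..k+1}. \<forall>j\<in>{1..k+1}. \<forall>l<n3.
           tinner n1 s n3 (gkU A B n1 n2 s n3 i) (gkU A B n1 n2 s n3 j) 0 0 l
             = (if i = j then tube_e else tube_o) 0 0 l)"
proof -
  have "orthonormal_upto (frob_inner n2 s) (\<lambda>i. fourier_slice n3 (gkV A B n1 n2 s n3 i) k0) k
      \<and> orthonormal_upto (frob_inner n1 s) (\<lambda>i. fourier_slice n3 (gkU A B n1 n2 s n3 i) k0) (Suc k)"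
    if "k0 < n3" for k0
    using global_golub_kahan.orthonormal[OF gk_fourier_slices_global_golub_kahan[OF that assms]] .
  then show ?thesis
    by (intro conjI ballI allI impI tinner_eq_delta) (auto simp: orthonormal_upto_def)
qed

end
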